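(* Let $\mathcal G$ be a topological $2$-group, $X$ a topological space, $c$ a $\mathcal G$-valued Čech cocycle subordinate to an open cover $\mathcal U=\{U_i\}_{i\in I}$ of $X$, and $\mathcal V=\{V_a\}_{a\in A}$ a refinement of $\mathcal U$. Let $c_{|\mathcal V}$ be the $\mathcal G$-valued Čech cocycle subordinate to $\mathcal V$ induced by restriction of $c$ (along a refinement map). Then there is a $\mathcal G$-bundle morphism $\pi_{c_{|\mathcal V}}\to\pi_c$.
   Context: Topological $2$-group $\mathcal G=(\mathcal G_1\rightrightarrows\mathcal G_0)$, $\mathcal E=\mathrm{Ker}(s)$, ${}^xe=1_xe1_{x^{-1}}$. A $\mathcal G$-valued Čech cocycle subordinate to $\mathcal U$ is $c=(\mathbf x,\mathbf e)$ with continuous $\mathbf x_{ij}\colon U_i\cap U_j\to\mathcal G_0$, $\mathbf e_{ijk}\colon U_i\cap U_j\cap U_k\to\mathcal E$ satisfying $t(\mathbf e_{ijk})\mathbf x_{ij}\mathbf x_{jk}=\mathbf x_{ik}$ and $\mathbf e_{ikl}\mathbf e_{ijk}=\mathbf e_{ijl}\,{}^{\mathbf x_{ij}}\mathbf e_{jkl}$. Given a refinement map $\alpha\colon A\to I$ ($V_a\subset U_{\alpha(a)}$), the restriction $c_{|\mathcal V}=(\mathbf x',\mathbf e')$ is $\mathbf x'_{ab}=\mathbf x_{\alpha(a)\alpha(b)}|_{V_a\cap V_b}$, $\mathbf e'_{abc}=\mathbf e_{\alpha(a)\alpha(b)\alpha(c)}|_{V_a\cap V_b\cap V_c}$. For a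 cocycle $c$, $\pi_c\colon P_c\to\overline X$ is the principal $\mathcal G$-bundle with $P_0=\coprod_iU_i\times\mathcal G_0$, $P_1=\coprod_{i,j}(U_i\cap U_j)\times\mathcal G_1$, $s((v,g)_{ij})=(v,s(g))_i$, $t((v,g)_{ij})=(v,\mathbf x_{ij}(v)^{-1}t(g))_j$, $(v,g)_{ij}*(v,h)_{jk}=(v,\mathbf e_{ijk}(v)(g*(1_{\mathbf x_{ij}(v)}h)))_{ik}$ (where $g*h=h1_{t(g)^{-1}}g$ in $\mathcal G$), right $\mathcal G$-action by right multiplication, and $\pi_c$ the projection to $X$. A $\mathcal G$-bundle morphism $\pi\to\pi'$ over $X$ is a $\mathcal G$-equivariant continuous functor $f$ with $\pi'f=\pi$. *)

theory Defs
  imports "HOL-Analysis.Analysis"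
begin

definition topological_group ::
  "'a topology \<Rightarrow> ('a \<Rightarrow> 'a \<Rightarrow> 'a) \<Rightarrow> 'a \<Rightarrow> ('a \<Rightarrow> 'a) \<Rightarrow> bool" where
  "topological_group T mul one ginv \<longleftrightarrow>
     one \<in> topspace T \<and>
     (\<forall>x\<in>topspace T. \<forall>y\<in>topspace T. mul x y \<in> topspace T) \<and>
     (\<forall>x\<in>topspace T. ginv x \<in> topspace T) \<and>
     (\<forall>x\<in>topspace T. \<forall>y\<in>topspace T. \<forall>z\<in>topspace T. mul (mul x y) z = mul x (mul y z)) \<and>
     (\<forall>x\<in>topspace T. mul one x = x \<and> mul x one = x) \<and>
     (\<forall>x\<in>topspace T. mul (ginv x) x = one \<and> mul x (ginv x) = one) \<and>
     continuous_map (prod_topology T T) T (\<lambda>(x, y). mul x y) \<and>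
     continuous_map T T ginv"

text \<open>A topological groupoid with object space O, arrow space A, source, target,
  identity map and composition in diagrammatic order: cmp g h is defined when
  tgt g = src h and goes from src g to tgt h.\<close>

definition topological_groupoid ::
  "'a topology \<Rightarrow> 'b topology \<Rightarrow> ('b \<Rightarrow> 'a) \<Rightarrow> ('b \<Rightarrow> 'a) \<Rightarrow> ('a \<Rightarrow> 'b)
    \<Rightarrow> ('b \<Rightarrow> 'b \<Rightarrow> 'b) \<Rightarrow> bool" where
  "topological_groupoid Ob A src tgt idt cmp \<longleftrightarrow>
     continuous_map A Ob src \<and> continuous_map A Ob tgt \<and> continuous_map Ob A idt \<and>
     continuous_map (subtopology (prod_topology A A) {(g, h). tgt g = src h}) A
        (\<lambda>(g, h). cmp g h) \<and>
     (\<forall>x\<in>topspace Ob. src (idt x) = x \<and> tgt (idt x) = x) \<and>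
     (\<forall>g\<in>topspace A. \<forall>h\<in>topspace A. tgt g = src h \<longrightarrow>
        cmp g h \<in> topspace A \<and> src (cmp g h) = src g \<and> tgt (cmp g h) = tgt h) \<and>
     (\<forall>f\<in>topspace A. \<forall>g\<in>topspace A. \<forall>h\<in>topspace A.
        tgt f = src g \<longrightarrow> tgt g = src h \<longrightarrow> cmp (cmp f g) h = cmp f (cmp g h)) \<and>
     (\<forall>g\<in>topspace A. cmp (idt (src g)) g = g \<and> cmp g (idt (tgt g)) = g) \<and>
     (\<exists>ainv. continuous_map A A ainv \<and>
        (\<forall>g\<in>topspace A. src (ainv g) = tgt g \<and> tgt (ainv g) = src g \<and>
            cmp g (ainv g) = idt (src g) \<and> cmp (ainv g) g = idt (tgt g)))"

text \<open>A (strict) topological 2-group \<open>G1 \<rightrightarrows> G0\<close>: a group object in topological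
  groupoids, i.e. both spaces are topological groups and the groupoid structure maps
  are compatible with the group structures (the multiplication is a functor).\<close>

record ('a, 'b) two_group =
  G0 :: "'a topology"
  mul0 :: "'a \<Rightarrow> 'a \<Rightarrow> 'a"
  one0 :: 'a
  inv0 :: "'a \<Rightarrow> 'a"
  G1 :: "'b topology"
  mul1 :: "'b \<Rightarrow> 'b \<Rightarrow> 'b"
  one1 :: 'b
  inv1 :: "'b \<Rightarrow> 'b"
  src :: "'b \<Rightarrow> 'a"
  tgt :: "'b \<Rightarrow> 'a"
  idt :: "'a \<Rightarrow> 'b"
  gcomp :: "'b \<Rightarrow> 'b \<Rightarrow> 'b"

definition topological_2group :: "('a, 'b, 'z) two_group_scheme \<Rightarrow> bool" where
  "topological_2group G \<longleftrightarrow>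
     topological_group (G0 G) (mul0 G) (one0 G) (inv0 G) \<and>
     topological_group (G1 G) (mul1 G) (one1 G) (inv1 G) \<and>
     topological_groupoid (G0 G) (G1 G) (src G) (tgt G) (idt G) (gcomp G) \<and>
     (\<forall>g\<in>topspace (G1 G). \<forall>h\<in>topspace (G1 G).
        src G (mul1 G g h) = mul0 G (src G g) (src G h) \<and>
        tgt G (mul1 G g h) = mul0 G (tgt G g) (tgt G h)) \<and>
     (\<forall>x\<in>topspace (G0 G). \<forall>y\<in>topspace (G0 G).
        idt G (mul0 G x y) = mul1 G (idt G x) (idt G y)) \<and>
     (\<forall>g\<in>topspace (G1 G). \<forall>h\<in>topspace (G1 G).
      \<forall>g'\<in>topspace (G1 G). \<forall>h'\<in>topspace (G1 G).
        tgt G g = src G h \<longrightarrow> tgt G g' = src G h' \<longrightarrow>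
        gcomp G (mul1 G g g') (mul1 G h h') = mul1 G (gcomp G g h) (gcomp G g' h'))"

definition kernel_src :: "('a, 'b, 'z) two_group_scheme \<Rightarrow> 'b topology" where
  "kernel_src G = subtopology (G1 G) {g. src G g = one0 G}"

definition conj_act :: "('a, 'b, 'z) two_group_scheme \<Rightarrow> 'a \<Rightarrow> 'b \<Rightarrow> 'b" where
  "conj_act G x e = mul1 G (mul1 G (idt G x) e) (idt G (inv0 G x))"

definition open_cover :: "'x topology \<Rightarrow> 'i set \<Rightarrow> ('i \<Rightarrow> 'x set) \<Rightarrow> bool" where
  "open_cover X I U \<longleftrightarrow> (\<forall>i\<in>I. openin X (U i)) \<and> (\<Union>i\<in>I. U i) = topspace X"

definition cech_cocycle ::
  "('a, 'b, 'z) two_group_scheme \<Rightarrow> 'x topology \<Rightarrow> 'i set \<Rightarrow> ('i \<Rightarrow> 'x set)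
    \<Rightarrow> ('i \<Rightarrow> 'i \<Rightarrow> 'x \<Rightarrow> 'a) \<Rightarrow> ('i \<Rightarrow> 'i \<Rightarrow> 'i \<Rightarrow> 'x \<Rightarrow> 'b) \<Rightarrow> bool" where
  "cech_cocycle G X I U x e \<longleftrightarrow>
     (\<forall>i\<in>I. \<forall>j\<in>I. continuous_map (subtopology X (U i \<inter> U j)) (G0 G) (x i j)) \<and>
     (\<forall>i\<in>I. \<forall>j\<in>I. \<forall>k\<in>I.
        continuous_map (subtopology X (U i \<inter> U j \<inter> U k)) (kernel_src G) (e i j k)) \<and>
     (\<forall>i\<in>I. \<forall>j\<in>I. \<forall>k\<in>I. \<forall>v\<in>U i \<inter> U j \<inter> U k.
        mul0 G (mul0 G (tgt G (e i j k v)) (x i j v)) (x j k v) = x i k v) \<and>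
     (\<forall>i\<in>I. \<forall>j\<in>I. \<forall>k\<in>I. \<forall>l\<in>I. \<forall>v\<in>U i \<inter> U j \<inter> U k \<inter> U l.
        mul1 G (e i k l v) (e i j k v) = mul1 G (e i j l v) (conj_act G (x i j v) (e j k l v)))"

definition refinement_map ::
  "'i set \<Rightarrow> ('i \<Rightarrow> 'x set) \<Rightarrow> 'j set \<Rightarrow> ('j \<Rightarrow> 'x set) \<Rightarrow> ('j \<Rightarrow> 'i) \<Rightarrow> bool" where
  "refinement_map I U A V \<alpha> \<longleftrightarrow> (\<forall>a\<in>A. \<alpha> a \<in> I \<and> V a \<subseteq> U (\<alpha> a))"

text \<open>Restriction of a cocycle along a refinement map (functions are only ever
  evaluated on the relevant intersections \<open>V\<^sub>a \<inter> V\<^sub>b\<close>, \<open>V\<^sub>a \<inter> V\<^sub>b \<inter> V\<^sub>c\<close>).\<close>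

definition restrict_x :: "('j \<Rightarrow> 'i) \<Rightarrow> ('i \<Rightarrow> 'i \<Rightarrow> 'x \<Rightarrow> 'a) \<Rightarrow> 'j \<Rightarrow> 'j \<Rightarrow> 'x \<Rightarrow> 'a" where
  "restrict_x \<alpha> x a b = x (\<alpha> a) (\<alpha> b)"

definition restrict_e ::
  "('j \<Rightarrow> 'i) \<Rightarrow> ('i \<Rightarrow> 'i \<Rightarrow> 'i \<Rightarrow> 'x \<Rightarrow> 'b) \<Rightarrow> 'j \<Rightarrow> 'j \<Rightarrow> 'j \<Rightarrow> 'x \<Rightarrow> 'b" where
  "restrict_e \<alpha> e a b c = e (\<alpha> a) (\<alpha> b) (\<alpha> c)"

text \<open>Data of a \<open>\<G>\<close>-bundle \<open>\<pi> : P \<rightarrow> X\<close>: a topological groupoid \<open>P1 \<rightrightarrows> P0\<close>, a right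
  action of \<open>\<G>\<close> (act0 on objects by \<open>G0\<close>, act1 on arrows by \<open>G1\<close>), and the
  projection on objects to \<open>X\<close> (on arrows it is induced, \<open>X\<close> being discrete).\<close>

record ('p, 'q, 'a, 'b, 'x) gbundle =
  P0 :: "'p topology"
  P1 :: "'q topology"
  psrc :: "'q \<Rightarrow> 'p"
  ptgt :: "'q \<Rightarrow> 'p"
  pcomp :: "'q \<Rightarrow> 'q \<Rightarrow> 'q"
  act0 :: "'p \<Rightarrow> 'a \<Rightarrow> 'p"
  act1 :: "'q \<Rightarrow> 'b \<Rightarrow> 'q"
  proj :: "'p \<Rightarrow> 'x"

text \<open>A morphism of \<open>\<G>\<close>-bundles over \<open>X\<close>: a continuous functor (f0 on objects, f1 on
  arrows), \<open>\<G>\<close>-equivariant, commuting with the projections. (Between groupoids,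
  preservation of composition implies preservation of identities.)\<close>

definition gbundle_morphism ::
  "('a, 'b, 'z) two_group_scheme \<Rightarrow> ('p, 'q, 'a, 'b, 'x) gbundle \<Rightarrow> ('p', 'q', 'a, 'b, 'x) gbundle
    \<Rightarrow> ('p \<Rightarrow> 'p') \<Rightarrow> ('q \<Rightarrow> 'q') \<Rightarrow> bool" where
  "gbundle_morphism G P Q f0 f1 \<longleftrightarrow>
     continuous_map (P0 P) (P0 Q) f0 \<and> continuous_map (P1 P) (P1 Q) f1 \<and>
     (\<forall>a\<in>topspace (P1 P). psrc Q (f1 a) = f0 (psrc P a) \<and> ptgt Q (f1 a) = f0 (ptgt P a)) \<and>
     (\<forall>a\<in>topspace (P1 P). \<forall>b\<in>topspace (P1 P). ptgt P a = psrc P b \<longrightarrow>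
        f1 (pcomp P a b) = pcomp Q (f1 a) (f1 b)) \<and>
     (\<forall>p\<in>topspace (P0 P). \<forall>y\<in>topspace (G0 G). f0 (act0 P p y) = act0 Q (f0 p) y) \<and>
     (\<forall>a\<in>topspace (P1 P). \<forall>h\<in>topspace (G1 G). f1 (act1 P a h) = act1 Q (f1 a) h) \<and>
     (\<forall>p\<in>topspace (P0 P). proj Q (f0 p) = proj P p)"

text \<open>Objects \<open>(v,g)\<^sub>i\<close> are
  encoded as \<open>(i, (v, g))\<close>, arrows \<open>(v,g)\<^sub>i\<^sub>j\<close> as \<open>((i, j), (v, g))\<close>.\<close>

definition cech_bundle ::
  "('a, 'b, 'z) two_group_scheme \<Rightarrow> 'x topology \<Rightarrow> 'i set \<Rightarrow> ('i \<Rightarrow> 'x set)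
    \<Rightarrow> ('i \<Rightarrow> 'i \<Rightarrow> 'x \<Rightarrow> 'a) \<Rightarrow> ('i \<Rightarrow> 'i \<Rightarrow> 'i \<Rightarrow> 'x \<Rightarrow> 'b)
    \<Rightarrow> ('i \<times> ('x \<times> 'a), ('i \<times> 'i) \<times> ('x \<times> 'b), 'a, 'b, 'x) gbundle" where
  "cech_bundle G X I U x e =
    \<lparr> P0 = sum_topology (\<lambda>i. prod_topology (subtopology X (U i)) (G0 G)) I,
      P1 = sum_topology (\<lambda>(i, j). prod_topology (subtopology X (U i \<inter> U j)) (G1 G)) (I \<times> I),
      psrc = (\<lambda>((i, j), (v, g)). (i, (v, src G g))),
      ptgt = (\<lambda>((i, j), (v, g)). (j, (v, mul0 G (inv0 G (x i j v)) (tgt G g)))),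
      pcomp = (\<lambda>((i, j), (v, g)) ((j', k), (v', h)).
                 ((i, k), (v, mul1 G (e i j k v) (gcomp G g (mul1 G (idt G (x i j v)) h))))),
      act0 = (\<lambda>(i, (v, g)) y. (i, (v, mul0 G g y))),
      act1 = (\<lambda>((i, j), (v, g)) h. ((i, j), (v, mul1 G g h))),
      proj = (\<lambda>(i, (v, g)). v) \<rparr>"

end

theory Submission
  imports Defs
begin

text \<open>The morphism relabels charts along the refinement map: \<open>(v, g)\<^sub>a \<mapsto> (v, g)\<^sub>\<alpha>\<^sub>a\<close>
  on objects and \<open>(v, g)\<^sub>a\<^sub>b \<mapsto> (v, g)\<^sub>\<alpha>\<^sub>a\<^sub>,\<^sub>\<alpha>\<^sub>b\<close> on arrows. Since the restricted cocycle is
  \<open>c\<close> pulled back along \<open>\<alpha>\<close>, source, target, composition, action and projection are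
  preserved on the nose, and the map is continuous because it sends each summand
  \<open>V\<^sub>a \<times> \<G>\<^sub>0\<close> by an inclusion into the summand \<open>U\<^sub>\<alpha>\<^sub>a \<times> \<G>\<^sub>0\<close>.\<close>

lemma continuous_map_from_sum_topology:
  assumes "\<And>i. i \<in> I \<Longrightarrow> continuous_map (X i) Y (\<lambda>p. f (i, p))"
  shows "continuous_map (sum_topology X I) Y f"
  unfolding continuous_map_def
proof (intro conjI allI impI)
  show "f \<in> topspace (sum_topology X I) \<rightarrow> topspace Y"
    using assms continuous_map_image_subset_topspace by fastforce
  fix W assume W: "openin Y W"
  have fibre: "{p. (i, p) \<in> {z \<in> topspace (sum_topology X I). f z \<in> W}}
      = {p \<in> topspace (X i). f (i, p) \<in> W}" if "i \<in> I" for i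
    using that by auto
  show "openin (sum_topology X I) {z \<in> topspace (sum_topology X I). f z \<in> W}"
    unfolding openin_sum_topology
    using fibre openin_continuous_map_preimage[OF assms W] by auto
qed

lemma continuous_map_sum_topology_reindex:
  assumes "\<And>a. a \<in> A \<Longrightarrow> \<sigma> a \<in> I"
    and "\<And>a. a \<in> A \<Longrightarrow> continuous_map (X a) (Y (\<sigma> a)) (f a)"
  shows "continuous_map (sum_topology X A) (sum_topology Y I) (\<lambda>(a, p). (\<sigma> a, f a p))"
proof (rule continuous_map_from_sum_topology)
  fix a assume a: "a \<in> A"
  have "continuous_map (Y (\<sigma> a)) (sum_topology Y I) (Pair (\<sigma> a))"
    using assms(1)[OF a] by (rule continuous_map_component_injection)
  with assms(2)[OF a] have "continuous_map (X a) (sum_topology Y I) (Pair (\<sigma> a) \<circ> f a)"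
    by (rule continuous_map_compose)
  then show "continuous_map (X a) (sum_topology Y I) (\<lambda>p. case (a, p) of (a, p) \<Rightarrow> (\<sigma> a, f a p))"
    by (simp add: o_def)
qed

lemma continuous_map_subtopology_inclusion:
  "S \<subseteq> T \<Longrightarrow> continuous_map (subtopology X S) (subtopology X T) (\<lambda>p. p)"
  by (auto simp: continuous_map_in_subtopology continuous_map_from_subtopology)

lemma continuous_map_prod_subtopology_inclusion:
  "S \<subseteq> T \<Longrightarrow>
    continuous_map (prod_topology (subtopology X S) Z) (prod_topology (subtopology X T) Z) (\<lambda>p. p)"
  using continuous_map_prod_top[of "subtopology X S" Z "subtopology X T" Z "\<lambda>p. p" "\<lambda>p. p"]
  by (simp add: continuous_map_subtopology_inclusion id_def)

lemma gbundle_morphism_cech_bundle_restrict: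
  assumes "refinement_map I U A V \<alpha>"
  shows "gbundle_morphism G
           (cech_bundle G X A V (restrict_x \<alpha> x) (restrict_e \<alpha> e))
           (cech_bundle G X I U x e)
           (\<lambda>(a, p). (\<alpha> a, p)) (\<lambda>(ab, p). (map_prod \<alpha> \<alpha> ab, p))"
  unfolding gbundle_morphism_def
proof (intro conjI)
  have \<alpha>: "\<alpha> a \<in> I" "V a \<subseteq> U (\<alpha> a)" if "a \<in> A" for a
    using assms that by (auto simp: refinement_map_def)
  have "continuous_map (sum_topology (\<lambda>a. prod_topology (subtopology X (V a)) (G0 G)) A)
      (sum_topology (\<lambda>i. prod_topology (subtopology X (U i)) (G0 G)) I) (\<lambda>(a, p). (\<alpha> a, p))"
    by (rule continuous_map_sum_topology_reindex[where f = "\<lambda>_ p. p"])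
      (use \<alpha> in \<open>auto intro!: continuous_map_prod_subtopology_inclusion\<close>)
  then show "continuous_map (P0 (cech_bundle G X A V (restrict_x \<alpha> x) (restrict_e \<alpha> e)))
      (P0 (cech_bundle G X I U x e)) (\<lambda>(a, p). (\<alpha> a, p))"
    by (simp add: cech_bundle_def)
  have "continuous_map
      (sum_topology (\<lambda>(a, b). prod_topology (subtopology X (V a \<inter> V b)) (G1 G)) (A \<times> A))
      (sum_topology (\<lambda>(i, j). prod_topology (subtopology X (U i \<inter> U j)) (G1 G)) (I \<times> I))
      (\<lambda>(ab, p). (map_prod \<alpha> \<alpha> ab, p))"
    by (rule continuous_map_sum_topology_reindex[where f = "\<lambda>_ p. p"])
      (use \<alpha> in \<open>force intro!: continuous_map_prod_subtopology_inclusion Int_mono\<close>)+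
  then show "continuous_map (P1 (cech_bundle G X A V (restrict_x \<alpha> x) (restrict_e \<alpha> e)))
      (P1 (cech_bundle G X I U x e)) (\<lambda>(ab, p). (map_prod \<alpha> \<alpha> ab, p))"
    by (simp add: cech_bundle_def)
qed (clarsimp simp: cech_bundle_def restrict_x_def restrict_e_def)+

theorem lemma7:
  fixes G :: "('a, 'b) two_group"
    and X :: "'x topology"
    and I :: "'i set" and U :: "'i \<Rightarrow> 'x set"
    and A :: "'j set" and V :: "'j \<Rightarrow> 'x set"
    and x :: "'i \<Rightarrow> 'i \<Rightarrow> 'x \<Rightarrow> 'a" and e :: "'i \<Rightarrow> 'i \<Rightarrow> 'i \<Rightarrow> 'x \<Rightarrow> 'b"
    and \<alpha> :: "'j \<Rightarrow> 'i"
  assumes "topological_2group G"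
    and "open_cover X I U"
    and "cech_cocycle G X I U x e"
    and "open_cover X A V"
    and "refinement_map I U A V \<alpha>"
  shows "\<exists>f0 f1. gbundle_morphism G
            (cech_bundle G X A V (restrict_x \<alpha> x) (restrict_e \<alpha> e))
            (cech_bundle G X I U x e) f0 f1"
  using gbundle_morphism_cech_bundle_restrict[OF assms(5)] by blast

end
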